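(* Let $\sigma,\tau$ be $d$-dimensional signatures on a connected graph $G$ with $\sigma\cong\tau$ via a switching map $f:V\to\mathsf{O}(d)$. Then for any distinct $i,j\in V$, $$F_{ij}\,\mathcal{C}^\sigma(i,j)=\mathcal{C}^\tau(i,j)\,F_{ij},\qquad F_{ij}=\begin{bmatrix}f(i)&0_{d\times d}\\0_{d\times d}&f(j)\end{bmatrix}.$$
   Context: $G=(V,E,W)$ is a finite connected weighted graph, $w_{xy}>0$ iff $\{x,y\}\in E$, $\deg(x)=\sum_y w_{xy}$. A $d$-dimensional signature maps oriented edges to $\mathsf{O}(d)$ with $\sigma_{yx}=\sigma_{xy}^{\mathrm T}$. $\sigma\cong\tau$ via $f$ means $f(x)\sigma_{xy}=\tau_{xy}f(y)$ for every oriented edge $(x,y)$. The connection Laplacian $\mathcal{L}^\sigma$ is the $nd\times nd$ block matrix with blocks $\deg(x)I_d$ on the diagonal, $-w_{xy}\sigma_{xy}$ for $x\sim y$, $0$ otherwise. For $M=\begin{bmatrix}A&B\\C&D\end{bmatrix}$, $M/D=A-BD^\dagger C$. The conductance matrix is $\mathcal{C}^\sigma(i,j)=\mathcal{L}^\sigma/\mathcal{L}^\sigma_{\{i,j\}^c,\{i,j\}^c}\in\mathbb{R}^{2d\times2d}$, blocks ordered $i$ then $j$. *)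

theory Defs
  imports "HOL-Analysis.Analysis"
begin

text \<open>Weighted graphs on a finite vertex type 'v: weights w x y, with
  w x y > 0 iff x and y are adjacent (no loops).\<close>

definition weighted_graph :: "('v::finite \<Rightarrow> 'v \<Rightarrow> real) \<Rightarrow> bool" where
  "weighted_graph w \<longleftrightarrow> (\<forall>x y. w x y = w y x) \<and> (\<forall>x y. 0 \<le> w x y) \<and> (\<forall>x. w x x = 0)"

definition graph_connected :: "('v \<Rightarrow> 'v \<Rightarrow> real) \<Rightarrow> bool" where
  "graph_connected w \<longleftrightarrow> (\<forall>x y. (\<lambda>a b. 0 < w a b)\<^sup>*\<^sup>* x y)"

definition deg :: "('v::finite \<Rightarrow> 'v \<Rightarrow> real) \<Rightarrow> 'v \<Rightarrow> real" where
  "deg w x = (\<Sum>y\<in>UNIV. w x y)"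

text \<open>A d-dimensional signature (d = CARD('d)): orthogonal matrices on oriented edges,
  with sigma y x = transpose (sigma x y).\<close>

definition signature :: "('v \<Rightarrow> 'v \<Rightarrow> real) \<Rightarrow> ('v \<Rightarrow> 'v \<Rightarrow> real^'d^'d) \<Rightarrow> bool" where
  "signature w \<sigma> \<longleftrightarrow> (\<forall>x y. 0 < w x y \<longrightarrow>
      orthogonal_matrix (\<sigma> x y) \<and> \<sigma> y x = transpose (\<sigma> x y))"

definition switching_equiv ::
  "('v \<Rightarrow> 'v \<Rightarrow> real) \<Rightarrow> ('v \<Rightarrow> 'v \<Rightarrow> real^'d^'d) \<Rightarrow> ('v \<Rightarrow> 'v \<Rightarrow> real^'d^'d)
     \<Rightarrow> ('v \<Rightarrow> real^'d^'d) \<Rightarrow> bool" where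
  "switching_equiv w \<sigma> \<tau> f \<longleftrightarrow> (\<forall>x. orthogonal_matrix (f x)) \<and>
      (\<forall>x y. 0 < w x y \<longrightarrow> f x ** \<sigma> x y = \<tau> x y ** f y)"

text \<open>Matrices indexed by a finite index type, with explicit index sets for blocks.\<close>

type_synonym 'i mat = "'i \<Rightarrow> 'i \<Rightarrow> real"

definition mmul :: "'i set \<Rightarrow> 'i mat \<Rightarrow> 'i mat \<Rightarrow> 'i mat" where
  "mmul K A B = (\<lambda>p q. \<Sum>k\<in>K. A p k * B k q)"

definition is_pinv :: "'i set \<Rightarrow> 'i mat \<Rightarrow> 'i mat \<Rightarrow> bool" where
  "is_pinv T D X \<longleftrightarrow>
     (\<forall>p q. p \<notin> T \<or> q \<notin> T \<longrightarrow> X p q = 0) \<and>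
     (\<forall>p\<in>T. \<forall>q\<in>T. mmul T (mmul T D X) D p q = D p q) \<and>
     (\<forall>p\<in>T. \<forall>q\<in>T. mmul T (mmul T X D) X p q = X p q) \<and>
     (\<forall>p\<in>T. \<forall>q\<in>T. mmul T D X p q = mmul T D X q p) \<and>
     (\<forall>p\<in>T. \<forall>q\<in>T. mmul T X D p q = mmul T X D q p)"

definition pinv :: "'i set \<Rightarrow> 'i mat \<Rightarrow> 'i mat" where
  "pinv T D = (THE X. is_pinv T D X)"

text \<open>Schur complement M/D where D is the block of M indexed by the complement of S;
  meaningful for p, q in S: (M/D) = A - B D^+ C.\<close>

definition schur :: "'i set \<Rightarrow> 'i mat \<Rightarrow> 'i mat" where
  "schur S M = (let T = - S; Dp = pinv T M in
     (\<lambda>p q. M p q - (\<Sum>k\<in>T. \<Sum>l\<in>T. M p k * Dp k l * M l q)))"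

definition conn_laplacian ::
  "('v::finite \<Rightarrow> 'v \<Rightarrow> real) \<Rightarrow> ('v \<Rightarrow> 'v \<Rightarrow> real^'d^'d) \<Rightarrow> ('v \<times> 'd) mat" where
  "conn_laplacian w \<sigma> = (\<lambda>(x, a) (y, b).
     if x = y then (if a = b then deg w x else 0)
     else if 0 < w x y then - w x y * (\<sigma> x y $ a $ b) else 0)"

definition pair_idx :: "'v \<Rightarrow> 'v \<Rightarrow> ('v \<times> 'd) set" where
  "pair_idx i j = {i, j} \<times> UNIV"

text \<open>Conductance matrix C(i,j) = L / L_{{i,j}^c,{i,j}^c}, a 2d x 2d matrix indexed by
  pair_idx i j (blocks i then j).\<close>

definition conductance ::
  "('v::finite \<Rightarrow> 'v \<Rightarrow> real) \<Rightarrow> ('v \<Rightarrow> 'v \<Rightarrow> real^'d^'d) \<Rightarrow> 'v \<Rightarrow> 'v \<Rightarrow> ('v \<times> 'd) mat" where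
  "conductance w \<sigma> i j = schur (pair_idx i j) (conn_laplacian w \<sigma>)"

definition blockdiag :: "('v \<Rightarrow> real^'d^'d) \<Rightarrow> 'v \<Rightarrow> 'v \<Rightarrow> ('v \<times> 'd) mat" where
  "blockdiag f i j = (\<lambda>(x, a) (y, b).
     if x = y \<and> (x = i \<or> x = j) then f x $ a $ b else 0)"

end

theory Submission
  imports Defs
begin

text \<open>The switching map f gives the block-diagonal orthogonal matrix F = diag(f(x)), and
  switching equivalence says exactly F L^\<sigma> F^T = L^\<tau>. F commutes with the coordinate
  projection onto the complement T of the pair {i, j}. Because G is connected, the quadratic form
  of L^\<sigma>, which equals 1/2 \<Sum> w_xy |y_x - \<sigma>_xy y_y|^2, is positive on nonzero vectors
  vanishing at i. Hence the block L^\<sigma>_TT is invertible and its Moore-Penrose pseudoinverse is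
  its inverse. Conjugation by F carries this inverse to the inverse of L^\<tau>_TT, so it carries
  the Schur complement C^\<sigma>(i,j) to C^\<tau>(i,j); on the pair, F is F_ij.\<close>

section \<open>Matrices indexed by a finite type\<close>

definition as_matrix :: "('i::finite) mat \<Rightarrow> real^'i^'i" where
  "as_matrix A = (\<chi> p q. A p q)"

definition proj_matrix :: "('i::finite) set \<Rightarrow> real^'i^'i" where
  "proj_matrix K = (\<chi> p q. if p = q \<and> p \<in> K then 1 else 0)"

lemma as_matrix_nth [simp]: "as_matrix A $ p $ q = A p q"
  by (simp add: as_matrix_def)

lemma as_matrix_of_nth [simp]: "as_matrix (\<lambda>p q. Y $ p $ q) = Y"
  by (simp add: as_matrix_def)

lemma as_matrix_inject: "as_matrix A = as_matrix B \<longleftrightarrow> A = B"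
  by (auto simp: vec_eq_iff fun_eq_iff)

lemma as_matrix_diff: "as_matrix (\<lambda>p q. A p q - B p q) = as_matrix A - as_matrix B"
  by (simp add: vec_eq_iff)

lemma matrix_diff_ldistrib: "(A::real^'n^'m) ** (B - C) = A ** B - A ** C"
  by (simp add: vec_eq_iff matrix_matrix_mult_def sum_subtractf right_diff_distrib)

lemma matrix_diff_rdistrib: "((A::real^'n^'m) - B) ** C = A ** C - B ** C"
  by (simp add: vec_eq_iff matrix_matrix_mult_def sum_subtractf left_diff_distrib)

lemma matrix_add_rdistrib: "((A::real^'n^'m) + B) ** C = A ** C + B ** C"
  by (simp add: vec_eq_iff matrix_matrix_mult_def sum.distrib distrib_right)

lemma transpose_proj_matrix [simp]: "transpose (proj_matrix K) = proj_matrix K"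
  by (simp add: vec_eq_iff transpose_def proj_matrix_def)

lemma proj_matrix_mult_left: "(proj_matrix K ** A) $ p $ q = (if p \<in> K then A $ p $ q else 0)"
  by (simp add: matrix_matrix_mult_def proj_matrix_def if_distrib if_distribR cong: if_cong)

lemma proj_matrix_mult_right: "(A ** proj_matrix K) $ p $ q = (if q \<in> K then A $ p $ q else 0)"
proof -
  have "A ** proj_matrix K = transpose (proj_matrix K ** transpose A)"
    by (simp add: matrix_transpose_mul)
  then show ?thesis
    by (simp add: proj_matrix_mult_left transpose_def)
qed

lemma proj_matrix_mult_vec: "(proj_matrix K *v x) $ p = (if p \<in> K then x $ p else 0)"
  by (simp add: matrix_vector_mult_def proj_matrix_def if_distrib if_distribR cong: if_cong)

lemma inner_proj_matrix_mult: "(proj_matrix K *v x) \<bullet> y = x \<bullet> (proj_matrix K *v y)"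
  by (auto simp: inner_vec_def proj_matrix_mult_vec intro: sum.cong)

lemma proj_matrix_mult: "proj_matrix K ** proj_matrix J = proj_matrix (K \<inter> J)"
  by (simp add: vec_eq_iff proj_matrix_mult_left) (simp add: proj_matrix_def)

lemma proj_matrix_idem [simp]: "proj_matrix K ** proj_matrix K = proj_matrix K"
  by (simp add: proj_matrix_mult)

lemma matrix_mul_proj_matrix_idem [simp]: "A ** proj_matrix K ** proj_matrix K = A ** proj_matrix K"
  by (metis proj_matrix_idem matrix_mul_assoc)

lemma proj_matrix_empty [simp]: "proj_matrix {} = 0"
  by (simp add: vec_eq_iff proj_matrix_def)

lemma proj_matrix_add_compl: "proj_matrix K + proj_matrix (- K) = mat 1"
  by (simp add: vec_eq_iff proj_matrix_def mat_def)

lemma proj_matrix_sandwich_nth: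
  "(proj_matrix K ** A ** proj_matrix K) $ p $ q = (if p \<in> K \<and> q \<in> K then A $ p $ q else 0)"
  by (simp add: proj_matrix_mult_left proj_matrix_mult_right)

lemma eq_on_block_iff:
  "(\<forall>p\<in>K. \<forall>q\<in>K. A $ p $ q = B $ p $ q) \<longleftrightarrow>
     proj_matrix K ** A ** proj_matrix K = proj_matrix K ** B ** proj_matrix K"
  by (auto simp: vec_eq_iff proj_matrix_sandwich_nth)

lemma symmetric_on_block_iff:
  "(\<forall>p\<in>K. \<forall>q\<in>K. A $ p $ q = A $ q $ p) \<longleftrightarrow>
     transpose (proj_matrix K ** A ** proj_matrix K) = proj_matrix K ** A ** proj_matrix K"
  by (auto simp: vec_eq_iff proj_matrix_sandwich_nth transpose_def)

lemma as_matrix_mmul: "as_matrix (mmul K A B) = as_matrix A ** proj_matrix K ** as_matrix B"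
  by (simp add: vec_eq_iff matrix_matrix_mult_def[of "as_matrix A ** proj_matrix K"]
      proj_matrix_mult_right mmul_def if_distrib if_distribR sum.inter_restrict[symmetric] cong: if_cong)

section \<open>Block inverses, pseudoinverses and Schur complements\<close>

definition block_inverse :: "('i::finite) set \<Rightarrow> real^'i^'i \<Rightarrow> real^'i^'i \<Rightarrow> bool" where
  "block_inverse T L Y \<longleftrightarrow>
     proj_matrix T ** Y ** proj_matrix T = Y \<and>
     proj_matrix T ** L ** proj_matrix T ** Y = proj_matrix T \<and>
     Y ** proj_matrix T ** L ** proj_matrix T = proj_matrix T"

(* Oriented so that, on left-associated products, simp deletes the projections next to Y. *)
lemma block_inverse_rewrites:
  assumes "block_inverse T L Y"
  shows "proj_matrix T ** Y = Y" "X ** proj_matrix T ** Y = X ** Y"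
    and "Y ** proj_matrix T = Y" "X ** Y ** proj_matrix T = X ** Y"
    and "proj_matrix T ** L ** Y = proj_matrix T"
    and "X ** proj_matrix T ** L ** Y = X ** proj_matrix T"
    and "Y ** L ** proj_matrix T = proj_matrix T"
    and "X ** Y ** L ** proj_matrix T = X ** proj_matrix T"
proof -
  let ?P = "proj_matrix T"
  have Y: "?P ** Y ** ?P = Y" and LY: "?P ** L ** ?P ** Y = ?P" and YL: "Y ** ?P ** L ** ?P = ?P"
    using assms by (simp_all add: block_inverse_def)
  have "?P ** Y = ?P ** (?P ** Y ** ?P)"
    by (simp only: Y)
  also have "\<dots> = ?P ** Y ** ?P"
    by (simp only: matrix_mul_assoc proj_matrix_idem)
  finally show PY: "?P ** Y = Y"
    by (simp only: Y)
  have "Y ** ?P = ?P ** Y ** ?P ** ?P"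
    by (simp only: Y)
  also have "\<dots> = ?P ** Y ** ?P"
    by (simp only: matrix_mul_proj_matrix_idem)
  finally show YP: "Y ** ?P = Y"
    by (simp only: Y)
  show "X ** ?P ** Y = X ** Y"
    by (metis PY matrix_mul_assoc)
  show "X ** Y ** ?P = X ** Y"
    by (metis YP matrix_mul_assoc)
  show PLY: "?P ** L ** Y = ?P"
    by (metis LY PY matrix_mul_assoc)
  show YLP: "Y ** L ** ?P = ?P"
    by (metis YL YP)
  show "X ** ?P ** L ** Y = X ** ?P"
    by (metis PLY matrix_mul_assoc)
  show "X ** Y ** L ** ?P = X ** ?P"
    by (metis YLP matrix_mul_assoc)
qed

lemma block_inverse_is_pinv:
  assumes "block_inverse T (as_matrix D) (as_matrix X)"
  shows "is_pinv T D X"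
proof -
  let ?P = "proj_matrix T"
  note rules = matrix_mul_assoc block_inverse_rewrites[OF assms] as_matrix_mmul
  have X: "?P ** as_matrix X ** ?P = as_matrix X"
    using assms unfolding block_inverse_def by (elim conjE)
  have outside: "X p q = 0" if "p \<notin> T \<or> q \<notin> T" for p q
  proof -
    have "X p q = (?P ** as_matrix X ** ?P) $ p $ q"
      by (simp only: X as_matrix_nth)
    also have "\<dots> = 0"
      using that by (auto simp: proj_matrix_sandwich_nth)
    finally show ?thesis .
  qed
  have DXD: "?P ** as_matrix (mmul T (mmul T D X) D) ** ?P = ?P ** as_matrix D ** ?P"
    by (simp add: rules)
  have XDX: "?P ** as_matrix (mmul T (mmul T X D) X) ** ?P = ?P ** as_matrix X ** ?P"
    by (simp add: rules)
  have DX: "transpose (?P ** as_matrix (mmul T D X) ** ?P) = ?P ** as_matrix (mmul T D X) ** ?P"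
    by (simp add: rules)
  have XD: "transpose (?P ** as_matrix (mmul T X D) ** ?P) = ?P ** as_matrix (mmul T X D) ** ?P"
    by (simp add: rules)
  show ?thesis
    unfolding is_pinv_def
    using outside DXD[folded eq_on_block_iff] XDX[folded eq_on_block_iff]
      DX[folded symmetric_on_block_iff] XD[folded symmetric_on_block_iff]
    by simp
qed

lemma is_pinv_eq_block_inverse:
  assumes "block_inverse T (as_matrix D) Y" and "is_pinv T D X"
  shows "as_matrix X = Y"
proof -
  let ?P = "proj_matrix T"
  note rules = matrix_mul_assoc block_inverse_rewrites[OF assms(1)]
  have X: "?P ** as_matrix X ** ?P = as_matrix X"
    using assms(2) unfolding is_pinv_def by (auto simp: vec_eq_iff proj_matrix_sandwich_nth)
  have "?P ** as_matrix (mmul T (mmul T D X) D) ** ?P = ?P ** as_matrix D ** ?P"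
    using assms(2) unfolding is_pinv_def eq_on_block_iff[symmetric] by simp
  then have DXD: "?P ** as_matrix D ** ?P ** as_matrix X ** ?P ** as_matrix D ** ?P = ?P ** as_matrix D ** ?P"
    by (simp add: as_matrix_mmul matrix_mul_assoc)
  have "Y ** (?P ** as_matrix D ** ?P ** as_matrix X ** ?P ** as_matrix D ** ?P) ** Y
      = Y ** (?P ** as_matrix D ** ?P) ** Y"
    by (simp only: DXD)
  then have "?P ** as_matrix X ** ?P = Y"
    by (simp add: rules)
  with X show ?thesis by simp
qed

lemma pinv_eq_block_inverse:
  assumes "block_inverse T (as_matrix D) Y"
  shows "as_matrix (pinv T D) = Y"
proof -
  have "pinv T D = (\<lambda>p q. Y $ p $ q)"
    unfolding pinv_def
  proof (rule the_equality)
    show "is_pinv T D (\<lambda>p q. Y $ p $ q)"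
      using block_inverse_is_pinv[of T D "\<lambda>p q. Y $ p $ q"] assms by simp
    show "X = (\<lambda>p q. Y $ p $ q)" if "is_pinv T D X" for X
      using is_pinv_eq_block_inverse[OF assms that] as_matrix_inject by fastforce
  qed
  then show ?thesis by simp
qed

lemma schur_eq_block_inverse:
  assumes "block_inverse (- S) (as_matrix M) Y"
  shows "as_matrix (schur S M) = as_matrix M - as_matrix M ** Y ** as_matrix M"
proof -
  have "schur S M p q = M p q - mmul (- S) (mmul (- S) M (pinv (- S) M)) M p q" for p q
  proof -
    have "mmul (- S) (mmul (- S) M (pinv (- S) M)) M p q
        = (\<Sum>l\<in>- S. \<Sum>k\<in>- S. M p k * pinv (- S) M k l * M l q)"
      by (simp add: mmul_def sum_distrib_right)
    also have "\<dots> = (\<Sum>k\<in>- S. \<Sum>l\<in>- S. M p k * pinv (- S) M k l * M l q)"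
      by (rule sum.swap)
    finally show ?thesis
      by (simp add: schur_def Let_def)
  qed
  then have "schur S M = (\<lambda>p q. M p q - mmul (- S) (mmul (- S) M (pinv (- S) M)) M p q)"
    by blast
  then show ?thesis
    by (simp add: as_matrix_diff as_matrix_mmul pinv_eq_block_inverse[OF assms]
        block_inverse_rewrites[OF assms] matrix_mul_assoc)
qed

lemma left_inverse_commute:
  fixes A B C :: "real^'n^'n"
  assumes "B ** A = mat 1" and "A ** C = C ** A"
  shows "B ** C = C ** B"
proof -
  have "A ** B = mat 1"
    using assms(1) matrix_left_right_inverse by blast
  then have "B ** C = B ** (C ** A) ** B"
    by (metis assms(2) matrix_mul_assoc matrix_mul_rid)
  also have "\<dots> = (B ** A) ** C ** B"
    by (simp add: assms(2) flip: matrix_mul_assoc)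
  finally show ?thesis
    by (simp add: assms(1))
qed

lemma block_inverse_of_inverse:
  assumes "B ** (proj_matrix T ** L ** proj_matrix T + proj_matrix (- T)) = mat 1"
  shows "block_inverse T L (proj_matrix T ** B)"
proof -
  let ?P = "proj_matrix T"
  define K where "K = ?P ** L ** ?P + proj_matrix (- T)"
  have BK: "B ** K = mat 1"
    using assms by (simp add: K_def)
  then have KB: "K ** B = mat 1"
    using matrix_left_right_inverse by blast
  have PK: "?P ** K = ?P ** L ** ?P"
    by (simp add: K_def matrix_add_ldistrib matrix_mul_assoc proj_matrix_mult)
  have KP: "K ** ?P = ?P ** L ** ?P"
    by (simp add: K_def matrix_add_rdistrib proj_matrix_mult flip: matrix_mul_assoc)
  have BP: "B ** ?P = ?P ** B"
    by (rule left_inverse_commute[OF BK]) (simp add: PK KP)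
  have "?P ** (?P ** B) ** ?P = ?P ** (B ** ?P)"
    by (simp add: matrix_mul_assoc)
  also have "\<dots> = ?P ** B"
    by (simp add: BP matrix_mul_assoc)
  finally have Y: "?P ** (?P ** B) ** ?P = ?P ** B" .
  have "?P ** L ** ?P ** (?P ** B) = K ** ?P ** (?P ** B)"
    by (simp add: KP)
  also have "\<dots> = K ** (B ** ?P)"
    by (simp add: BP matrix_mul_assoc)
  also have "\<dots> = ?P"
    by (simp add: KB matrix_mul_assoc)
  finally have LY: "?P ** L ** ?P ** (?P ** B) = ?P" .
  have "?P ** B ** ?P ** L ** ?P = ?P ** B ** (?P ** L ** ?P)"
    by (simp add: matrix_mul_assoc)
  also have "\<dots> = ?P ** (B ** ?P) ** K"
    unfolding PK[symmetric] by (simp only: matrix_mul_assoc)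
  also have "\<dots> = ?P ** (B ** K)"
    by (simp only: BP) (simp add: matrix_mul_assoc)
  also have "\<dots> = ?P"
    by (simp add: BK)
  finally have YL: "?P ** B ** ?P ** L ** ?P = ?P" .
  from Y LY YL show ?thesis
    unfolding block_inverse_def by (simp add: matrix_mul_assoc)
qed

lemma block_inverse_exists:
  assumes inj: "\<And>x. proj_matrix T *v x = x \<Longrightarrow> proj_matrix T *v (L *v x) = 0 \<Longrightarrow> x = 0"
  shows "\<exists>Y. block_inverse T L Y"
proof -
  let ?P = "proj_matrix T" and ?Q = "proj_matrix (- T)"
  \<comment> \<open>K acts as L_TT on T and as the identity off T, so it is invertible iff L_TT is.\<close>
  define K where "K = ?P ** L ** ?P + ?Q"
  have PK: "?P ** K = ?P ** L ** ?P"
    by (simp add: K_def matrix_add_ldistrib matrix_mul_assoc proj_matrix_mult)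
  have QK: "?Q ** K = ?Q"
    by (simp add: K_def matrix_add_ldistrib matrix_mul_assoc proj_matrix_mult)
  have "x = 0" if Kx: "K *v x = 0" for x
  proof -
    have "?Q *v x = 0"
      using Kx by (metis QK matrix_vector_mul_assoc matrix_vector_mult_0_right)
    then have Px: "?P *v x = x"
      by (metis proj_matrix_add_compl matrix_vector_mult_add_rdistrib matrix_vector_mul_lid add_0_right)
    have "?P *v (L *v x) = (?P ** L ** ?P) *v x"
      by (simp add: Px flip: matrix_vector_mul_assoc)
    also have "\<dots> = 0"
      using Kx by (simp flip: PK matrix_vector_mul_assoc)
    finally show ?thesis
      using inj Px by blast
  qed
  then obtain B where "B ** K = mat 1"
    using matrix_left_invertible_ker by blast
  then have "block_inverse T L (?P ** B)"
    unfolding K_def by (rule block_inverse_of_inverse)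
  then show ?thesis ..
qed

lemma orthogonal_conj_mult:
  assumes "orthogonal_matrix F"
  shows "(F ** A ** transpose F) ** (F ** B ** transpose F) = F ** (A ** B) ** transpose F"
proof -
  have "(F ** A ** transpose F) ** (F ** B ** transpose F) = F ** A ** (transpose F ** F) ** B ** transpose F"
    by (simp add: matrix_mul_assoc)
  also have "\<dots> = F ** (A ** B) ** transpose F"
    using assms by (simp add: orthogonal_matrix_def matrix_mul_assoc)
  finally show ?thesis .
qed

lemma orthogonal_conj_eq_iff:
  assumes "orthogonal_matrix F"
  shows "B = F ** A ** transpose F \<longleftrightarrow> F ** A = B ** F"
proof
  assume "B = F ** A ** transpose F"
  then show "F ** A = B ** F"
    using assms by (simp add: orthogonal_matrix_def flip: matrix_mul_assoc)
next
  assume "F ** A = B ** F"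
  then have "F ** A ** transpose F = B ** (F ** transpose F)"
    by (simp add: matrix_mul_assoc)
  then show "B = F ** A ** transpose F"
    using assms by (simp add: orthogonal_matrix_def)
qed

lemma block_inverse_orthogonal_conj:
  assumes F: "orthogonal_matrix F" and commute: "F ** proj_matrix T = proj_matrix T ** F"
    and Y: "block_inverse T L Y"
  shows "block_inverse T (F ** L ** transpose F) (F ** Y ** transpose F)"
proof -
  define c where "c X = F ** X ** transpose F" for X
  have c_mult: "c A ** c B = c (A ** B)" for A B
    unfolding c_def by (rule orthogonal_conj_mult[OF F])
  have c_proj: "c (proj_matrix T) = proj_matrix T"
    unfolding c_def using orthogonal_conj_eq_iff[OF F] commute by metis
  from Y have "c (proj_matrix T) ** c Y ** c (proj_matrix T) = c Y"
    and "c (proj_matrix T) ** c L ** c (proj_matrix T) ** c Y = c (proj_matrix T)"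
    and "c Y ** c (proj_matrix T) ** c L ** c (proj_matrix T) = c (proj_matrix T)"
    unfolding block_inverse_def by (simp_all only: c_mult)
  then show ?thesis
    unfolding block_inverse_def c_proj by (simp add: c_def)
qed

lemma schur_orthogonal_conj:
  assumes F: "orthogonal_matrix F" and commute: "F ** proj_matrix (- S) = proj_matrix (- S) ** F"
    and N: "as_matrix N = F ** as_matrix M ** transpose F"
    and Y: "block_inverse (- S) (as_matrix M) Y"
  shows "as_matrix (schur S N) = F ** as_matrix (schur S M) ** transpose F"
proof -
  have "block_inverse (- S) (as_matrix N) (F ** Y ** transpose F)"
    unfolding N by (rule block_inverse_orthogonal_conj[OF F commute Y])
  then have "as_matrix (schur S N)
      = F ** as_matrix M ** transpose F - F ** (as_matrix M ** Y ** as_matrix M) ** transpose F"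
    by (simp add: schur_eq_block_inverse N orthogonal_conj_mult[OF F])
  also have "\<dots> = F ** as_matrix (schur S M) ** transpose F"
    by (simp add: schur_eq_block_inverse[OF Y] matrix_diff_ldistrib matrix_diff_rdistrib)
  finally show ?thesis .
qed

section \<open>The connection Laplacian\<close>

lemma sum_UNIV_prod:
  "(\<Sum>p\<in>(UNIV::('a::finite \<times> 'b::finite) set). g p) = (\<Sum>u\<in>UNIV. \<Sum>a\<in>UNIV. g (u, a))"
  by (simp add: sum.cartesian_product)

definition vertex_block :: "real^('v::finite \<times> 'd::finite) \<Rightarrow> 'v \<Rightarrow> real^'d" where
  "vertex_block x u = (\<chi> a. x $ (u, a))"

lemma vertex_block_nth [simp]: "vertex_block x u $ a = x $ (u, a)"
  by (simp add: vertex_block_def)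

lemma inner_vertex_blocks: "x \<bullet> z = (\<Sum>u\<in>UNIV. vertex_block x u \<bullet> vertex_block z u)"
  by (simp add: inner_vec_def sum_UNIV_prod)

lemma conn_laplacian_eq:
  assumes "weighted_graph w"
  shows "conn_laplacian w \<sigma> p q =
    (if p = q then deg w (fst p) else 0) - w (fst p) (fst q) * \<sigma> (fst p) (fst q) $ snd p $ snd q"
  using assms by (auto simp: conn_laplacian_def weighted_graph_def order_le_less split: prod.splits)

lemma vertex_block_conn_laplacian_mult:
  assumes "weighted_graph w"
  shows "vertex_block (as_matrix (conn_laplacian w \<sigma>) *v x) u
    = deg w u *\<^sub>R vertex_block x u - (\<Sum>v\<in>UNIV. w u v *\<^sub>R (\<sigma> u v *v vertex_block x v))"
proof -
  have "(as_matrix (conn_laplacian w \<sigma>) *v x) $ (u, a)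
      = (\<Sum>q\<in>UNIV. if (u, a) = q then deg w u * x $ q else 0)
        - (\<Sum>q\<in>UNIV. w u (fst q) * (\<sigma> u (fst q) $ a $ snd q * x $ q))" for a
    by (simp add: matrix_vector_mult_def conn_laplacian_eq[OF assms] left_diff_distrib sum_subtractf
        if_distrib[of "\<lambda>t. t * _"] mult.assoc cong: if_cong)
  moreover have "(\<Sum>q\<in>UNIV. if (u, a) = q then deg w u * x $ q else 0) = deg w u * x $ (u, a)" for a
    by (subst sum.delta') auto
  ultimately show ?thesis
    by (simp add: vec_eq_iff matrix_vector_mult_def sum_UNIV_prod sum_distrib_left)
qed

lemma norm_orthogonal_matrix_mult:
  "orthogonal_matrix (Q::real^'n^'n) \<Longrightarrow> norm (Q *v z) = norm z"
  by (metis orthogonal_transformation_matrix orthogonal_transformation_norm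
      matrix_of_matrix_vector_mul matrix_vector_mul_linear)

lemma conn_laplacian_quadratic_form:
  assumes wg: "weighted_graph w" and sig: "signature w \<sigma>"
  shows "x \<bullet> (as_matrix (conn_laplacian w \<sigma>) *v x)
    = (\<Sum>u\<in>UNIV. \<Sum>v\<in>UNIV. w u v * (norm (vertex_block x u - \<sigma> u v *v vertex_block x v))\<^sup>2) / 2"
proof -
  let ?y = "vertex_block x"
  have w: "w u v = w v u" "0 \<le> w u v" for u v
    using wg by (auto simp: weighted_graph_def)
  have edge_term: "w u v * (norm (?y u - \<sigma> u v *v ?y v))\<^sup>2
      = w u v * (?y u \<bullet> ?y u) - 2 * (w u v * (?y u \<bullet> (\<sigma> u v *v ?y v))) + w u v * (?y v \<bullet> ?y v)"
    for u v
  proof (cases "0 < w u v")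
    case True
    then have "norm (\<sigma> u v *v ?y v) = norm (?y v)"
      using sig norm_orthogonal_matrix_mult by (auto simp: signature_def)
    then have "(\<sigma> u v *v ?y v) \<bullet> (\<sigma> u v *v ?y v) = ?y v \<bullet> ?y v"
      by (simp add: dot_square_norm)
    then show ?thesis
      by (simp add: power2_norm_eq_inner inner_commute algebra_simps)
  next
    case False
    with w(2)[of u v] show ?thesis by simp
  qed
  have out_deg: "(\<Sum>u\<in>UNIV. \<Sum>v\<in>UNIV. w u v * (?y u \<bullet> ?y u)) = (\<Sum>u\<in>UNIV. deg w u * (?y u \<bullet> ?y u))"
    by (simp add: deg_def sum_distrib_right)
  have in_deg: "(\<Sum>u\<in>UNIV. \<Sum>v\<in>UNIV. w u v * (?y v \<bullet> ?y v)) = (\<Sum>u\<in>UNIV. deg w u * (?y u \<bullet> ?y u))"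
    by (subst sum.swap) (simp add: deg_def sum_distrib_right w(1))
  have "x \<bullet> (as_matrix (conn_laplacian w \<sigma>) *v x)
      = (\<Sum>u\<in>UNIV. deg w u * (?y u \<bullet> ?y u)) - (\<Sum>u\<in>UNIV. \<Sum>v\<in>UNIV. w u v * (?y u \<bullet> (\<sigma> u v *v ?y v)))"
    by (simp add: inner_vertex_blocks vertex_block_conn_laplacian_mult[OF wg] inner_diff_right
        inner_sum_right sum_subtractf)
  also have "\<dots> = (\<Sum>u\<in>UNIV. \<Sum>v\<in>UNIV. w u v * (norm (?y u - \<sigma> u v *v ?y v))\<^sup>2) / 2"
    by (simp add: edge_term sum.distrib sum_subtractf out_deg in_deg flip: sum_distrib_left)
  finally show ?thesis .
qed

lemma conn_laplacian_form_zero_imp_zero: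
  assumes wg: "weighted_graph w" and conn: "graph_connected w" and sig: "signature w \<sigma>"
    and form: "x \<bullet> (as_matrix (conn_laplacian w \<sigma>) *v x) = 0"
    and root: "vertex_block x i = 0"
  shows "x = 0"
proof -
  let ?y = "vertex_block x"
  let ?e = "\<lambda>u v. w u v * (norm (?y u - \<sigma> u v *v ?y v))\<^sup>2"
  have nonneg: "0 \<le> ?e u v" for u v
    using wg by (simp add: weighted_graph_def)
  have "(\<Sum>u\<in>UNIV. \<Sum>v\<in>UNIV. ?e u v) = 0"
    using form conn_laplacian_quadratic_form[OF wg sig, of x] by simp
  then have balanced: "?e u v = 0" for u v
    using nonneg by (simp add: sum_nonneg_eq_0_iff sum_nonneg)
  have edge: "norm (?y u) = norm (?y v)" if "0 < w u v" for u v
  proof -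
    have "?y u = \<sigma> u v *v ?y v"
      using balanced[of u v] that by simp
    moreover have "orthogonal_matrix (\<sigma> u v)"
      using that sig by (simp add: signature_def)
    ultimately show ?thesis
      by (simp add: norm_orthogonal_matrix_mult)
  qed
  have "norm (?y i) = norm (?y u)" for u
  proof -
    have "(\<lambda>a b. 0 < w a b)\<^sup>*\<^sup>* i u"
      using conn by (simp add: graph_connected_def)
    then show ?thesis
      by (induction rule: rtranclp_induct) (auto dest: edge)
  qed
  with root have "?y u = 0" for u
    by (metis norm_eq_zero)
  then show ?thesis
    by (simp add: vec_eq_iff flip: vertex_block_nth)
qed

lemma conn_laplacian_block_inverse_exists:
  assumes wg: "weighted_graph w" and conn: "graph_connected w" and sig: "signature w \<sigma>"
    and grounded: "\<And>a. (i, a) \<notin> T"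
  shows "\<exists>Y. block_inverse T (as_matrix (conn_laplacian w \<sigma>)) Y"
proof (rule block_inverse_exists)
  let ?L = "as_matrix (conn_laplacian w \<sigma>)" and ?P = "proj_matrix T"
  fix x
  assume Px: "?P *v x = x" and PLx: "?P *v (?L *v x) = 0"
  have "x $ (i, a) = 0" for a
  proof -
    have "x $ (i, a) = (?P *v x) $ (i, a)"
      by (simp only: Px)
    also have "\<dots> = 0"
      using grounded by (simp add: proj_matrix_mult_vec)
    finally show ?thesis .
  qed
  then have root: "vertex_block x i = 0"
    by (simp add: vec_eq_iff)
  have "x \<bullet> (?L *v x) = (?P *v x) \<bullet> (?L *v x)"
    by (simp only: Px)
  also have "\<dots> = 0"
    by (simp add: inner_proj_matrix_mult PLx)
  finally show "x = 0"
    using root by (rule conn_laplacian_form_zero_imp_zero[OF wg conn sig])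
qed

section \<open>Switching\<close>

definition block_diag_matrix :: "('v \<Rightarrow> real^'d^'d) \<Rightarrow> real^('v::finite \<times> 'd::finite)^('v \<times> 'd)" where
  "block_diag_matrix f = (\<chi> p q. if fst p = fst q then f (fst p) $ snd p $ snd q else 0)"

lemma block_diag_matrix_nth [simp]:
  "block_diag_matrix f $ (u, a) $ (v, b) = (if u = v then f u $ a $ b else 0)"
  by (simp add: block_diag_matrix_def)

lemma block_diag_matrix_mult_left:
  "(block_diag_matrix f ** A) $ (u, a) $ q = (\<Sum>c\<in>UNIV. f u $ a $ c * A $ (u, c) $ q)"
proof -
  have "(block_diag_matrix f ** A) $ (u, a) $ q
      = (\<Sum>v\<in>UNIV. if v = u then (\<Sum>c\<in>UNIV. f u $ a $ c * A $ (u, c) $ q) else 0)"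
    unfolding matrix_matrix_mult_def vec_lambda_beta sum_UNIV_prod by (rule sum.cong) auto
  then show ?thesis
    by simp
qed

lemma block_diag_matrix_mult_right:
  "(A ** block_diag_matrix f) $ p $ (v, b) = (\<Sum>c\<in>UNIV. A $ p $ (v, c) * f v $ c $ b)"
proof -
  have "(A ** block_diag_matrix f) $ p $ (v, b)
      = (\<Sum>u\<in>UNIV. if u = v then (\<Sum>c\<in>UNIV. A $ p $ (v, c) * f v $ c $ b) else 0)"
    unfolding matrix_matrix_mult_def vec_lambda_beta sum_UNIV_prod by (rule sum.cong) auto
  then show ?thesis
    by simp
qed

lemma block_diag_matrix_mult:
  "block_diag_matrix g ** block_diag_matrix h = block_diag_matrix (\<lambda>u. g u ** h u)"
proof -
  have "(block_diag_matrix g ** block_diag_matrix h) $ (u, a) $ (v, b)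
      = block_diag_matrix (\<lambda>u. g u ** h u) $ (u, a) $ (v, b)" for u a v b
    unfolding block_diag_matrix_mult_left by (simp add: matrix_matrix_mult_def)
  then show ?thesis
    by (simp add: vec_eq_iff)
qed

lemma transpose_block_diag_matrix:
  "transpose (block_diag_matrix f) = block_diag_matrix (\<lambda>u. transpose (f u))"
  by (auto simp: vec_eq_iff transpose_def)

lemma block_diag_matrix_id: "block_diag_matrix (\<lambda>u. mat 1) = mat 1"
  by (auto simp: vec_eq_iff mat_def)

lemma orthogonal_block_diag_matrix:
  "(\<And>u. orthogonal_matrix (f u)) \<Longrightarrow> orthogonal_matrix (block_diag_matrix f)"
  by (simp add: orthogonal_matrix_def transpose_block_diag_matrix block_diag_matrix_mult
      block_diag_matrix_id)

lemma block_diag_matrix_commute_proj: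
  "block_diag_matrix f ** proj_matrix (A \<times> UNIV) = proj_matrix (A \<times> UNIV) ** block_diag_matrix f"
  by (auto simp: vec_eq_iff proj_matrix_mult_left proj_matrix_mult_right)

definition degree_matrix :: "('v::finite \<Rightarrow> 'v \<Rightarrow> real) \<Rightarrow> real^('v \<times> 'd::finite)^('v \<times> 'd)" where
  "degree_matrix w = (\<chi> p q. if p = q then deg w (fst p) else 0)"

definition signed_adjacency_matrix ::
  "('v::finite \<Rightarrow> 'v \<Rightarrow> real) \<Rightarrow> ('v \<Rightarrow> 'v \<Rightarrow> real^'d^'d) \<Rightarrow> real^('v \<times> 'd::finite)^('v \<times> 'd)" where
  "signed_adjacency_matrix w \<sigma> = (\<chi> p q. w (fst p) (fst q) * \<sigma> (fst p) (fst q) $ snd p $ snd q)"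

lemma conn_laplacian_split:
  "weighted_graph w \<Longrightarrow>
    as_matrix (conn_laplacian w \<sigma>) = degree_matrix w - signed_adjacency_matrix w \<sigma>"
  by (simp add: vec_eq_iff conn_laplacian_eq degree_matrix_def signed_adjacency_matrix_def)

lemma block_diag_matrix_commute_degree:
  "block_diag_matrix f ** degree_matrix w = degree_matrix w ** block_diag_matrix f"
proof -
  have "(block_diag_matrix f ** degree_matrix w) $ (u, a) $ (v, b)
      = (degree_matrix w ** block_diag_matrix f) $ (u, a) $ (v, b)" for u a v b
    by (cases "u = v") (simp_all add: block_diag_matrix_mult_left block_diag_matrix_mult_right
        degree_matrix_def if_distrib[of "\<lambda>t. _ * t"] if_distrib[of "\<lambda>t. t * _"] cong: if_cong)
  then show ?thesis
    by (simp add: vec_eq_iff)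
qed

lemma switching_signed_adjacency:
  assumes wg: "weighted_graph w" and sw: "switching_equiv w \<sigma> \<tau> f"
  shows "block_diag_matrix f ** signed_adjacency_matrix w \<sigma> = signed_adjacency_matrix w \<tau> ** block_diag_matrix f"
proof -
  have "(block_diag_matrix f ** signed_adjacency_matrix w \<sigma>) $ (u, a) $ (v, b)
      = (signed_adjacency_matrix w \<tau> ** block_diag_matrix f) $ (u, a) $ (v, b)" for u a v b
  proof -
    have "(block_diag_matrix f ** signed_adjacency_matrix w \<sigma>) $ (u, a) $ (v, b)
        = w u v * (f u ** \<sigma> u v) $ a $ b"
      unfolding block_diag_matrix_mult_left
      by (simp add: signed_adjacency_matrix_def matrix_matrix_mult_def sum_distrib_left mult_ac)
    also have "\<dots> = w u v * (\<tau> u v ** f v) $ a $ b"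
      using sw wg by (cases "0 < w u v") (auto simp: switching_equiv_def weighted_graph_def order_le_less)
    also have "\<dots> = (signed_adjacency_matrix w \<tau> ** block_diag_matrix f) $ (u, a) $ (v, b)"
      unfolding block_diag_matrix_mult_right
      by (simp add: signed_adjacency_matrix_def matrix_matrix_mult_def sum_distrib_left mult_ac)
    finally show ?thesis .
  qed
  then show ?thesis
    by (simp add: vec_eq_iff)
qed

lemma switching_conn_laplacian:
  assumes "weighted_graph w" and "switching_equiv w \<sigma> \<tau> f"
  shows "block_diag_matrix f ** as_matrix (conn_laplacian w \<sigma>)
    = as_matrix (conn_laplacian w \<tau>) ** block_diag_matrix f"
  using assms by (simp add: conn_laplacian_split matrix_diff_ldistrib matrix_diff_rdistrib
      block_diag_matrix_commute_degree switching_signed_adjacency)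

lemma blockdiag_eq_on_pair_idx:
  "as_matrix (blockdiag f i j) ** proj_matrix (pair_idx i j) = block_diag_matrix f ** proj_matrix (pair_idx i j)"
  "proj_matrix (pair_idx i j) ** as_matrix (blockdiag f i j) = proj_matrix (pair_idx i j) ** block_diag_matrix f"
  by (auto simp: vec_eq_iff proj_matrix_mult_left proj_matrix_mult_right
      blockdiag_def pair_idx_def)

lemma block_diag_matrix_commute_proj_pair_idx:
  "block_diag_matrix f ** proj_matrix (pair_idx i j) = proj_matrix (pair_idx i j) ** block_diag_matrix f"
  unfolding pair_idx_def by (rule block_diag_matrix_commute_proj)

lemma mmul_blockdiag_left:
  assumes "p \<in> pair_idx i j"
  shows "mmul (pair_idx i j) (blockdiag f i j) C p q = (block_diag_matrix f ** as_matrix C) $ p $ q"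
proof -
  have "mmul (pair_idx i j) (blockdiag f i j) C p q
      = (as_matrix (blockdiag f i j) ** proj_matrix (pair_idx i j) ** as_matrix C) $ p $ q"
    by (simp flip: as_matrix_mmul)
  also have "\<dots> = (proj_matrix (pair_idx i j) ** (block_diag_matrix f ** as_matrix C)) $ p $ q"
    by (simp add: blockdiag_eq_on_pair_idx block_diag_matrix_commute_proj_pair_idx matrix_mul_assoc)
  also have "\<dots> = (block_diag_matrix f ** as_matrix C) $ p $ q"
    using assms by (simp add: proj_matrix_mult_left)
  finally show ?thesis .
qed

lemma mmul_blockdiag_right:
  assumes "q \<in> pair_idx i j"
  shows "mmul (pair_idx i j) C (blockdiag f i j) p q = (as_matrix C ** block_diag_matrix f) $ p $ q"
proof -
  have "mmul (pair_idx i j) C (blockdiag f i j) p q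
      = (as_matrix C ** (proj_matrix (pair_idx i j) ** as_matrix (blockdiag f i j))) $ p $ q"
    by (simp add: matrix_mul_assoc flip: as_matrix_mmul)
  also have "\<dots> = (as_matrix C ** block_diag_matrix f ** proj_matrix (pair_idx i j)) $ p $ q"
    by (simp add: blockdiag_eq_on_pair_idx flip: block_diag_matrix_commute_proj_pair_idx matrix_mul_assoc)
  also have "\<dots> = (as_matrix C ** block_diag_matrix f) $ p $ q"
    using assms by (simp add: proj_matrix_mult_right)
  finally show ?thesis .
qed

theorem proposition5p6:
  fixes w :: "'v::finite \<Rightarrow> 'v \<Rightarrow> real"
    and \<sigma> \<tau> :: "'v \<Rightarrow> 'v \<Rightarrow> real^'d^'d"
    and f :: "'v \<Rightarrow> real^'d^'d"
    and i j :: 'v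
  assumes "weighted_graph w" and "graph_connected w"
    and "signature w \<sigma>" and "signature w \<tau>"
    and "switching_equiv w \<sigma> \<tau> f"
    and "i \<noteq> j"
  shows "\<forall>p\<in>pair_idx i j. \<forall>q\<in>pair_idx i j.
     mmul (pair_idx i j) (blockdiag f i j) (conductance w \<sigma> i j) p q
   = mmul (pair_idx i j) (conductance w \<tau> i j) (blockdiag f i j) p q"
proof -
  let ?S = "pair_idx i j" and ?F = "block_diag_matrix f"
  have F: "orthogonal_matrix ?F"
    using assms(5) by (simp add: switching_equiv_def orthogonal_block_diag_matrix)
  have commute: "?F ** proj_matrix (- ?S) = proj_matrix (- ?S) ** ?F"
    using block_diag_matrix_commute_proj[of f "- {i, j}"] by (simp add: pair_idx_def)
  have L: "as_matrix (conn_laplacian w \<tau>) = ?F ** as_matrix (conn_laplacian w \<sigma>) ** transpose ?F"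
    using orthogonal_conj_eq_iff[OF F] switching_conn_laplacian[OF assms(1,5)] by blast
  obtain Y where "block_inverse (- ?S) (as_matrix (conn_laplacian w \<sigma>)) Y"
    using conn_laplacian_block_inverse_exists[OF assms(1-3), of i "- ?S"] by (auto simp: pair_idx_def)
  from schur_orthogonal_conj[OF F commute L this]
  have "as_matrix (conductance w \<tau> i j) = ?F ** as_matrix (conductance w \<sigma> i j) ** transpose ?F"
    by (simp add: conductance_def)
  then have "?F ** as_matrix (conductance w \<sigma> i j) = as_matrix (conductance w \<tau> i j) ** ?F"
    using orthogonal_conj_eq_iff[OF F] by blast
  then show ?thesis
    by (simp add: mmul_blockdiag_left mmul_blockdiag_right)
qed

end
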